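(* Let $m,n\in\mathbb{N}$, $T=\{1,\dots,m\}$, $\bar A\in\mathbb{R}^{m\times n}$, $\bar b\in\mathbb{R}^m$ with $P:=\{x\in\mathbb{R}^n\mid\bar Ax\le\bar b\}\neq\emptyset$, and let $F$ be a face of $P$. Then there exists $\gamma_F\ge0$ such that $\operatorname{clm}\mathcal{F}_{\bar A}(\bar b,x)=\gamma_F$ for all $x\in\operatorname{ri}F$, and moreover $\operatorname{clm}\mathcal{F}_{\bar A}(\bar b,x)\ge\gamma_F$ for all $x\in F\setminus\operatorname{ri}F$.
   Context: $\mathcal{F}_{\bar A}:\mathbb{R}^m\rightrightarrows\mathbb{R}^n$ is defined by $\mathcal{F}_{\bar A}(b)=\{x\in\mathbb{R}^n\mid\bar Ax\le b\}$ (right-hand side perturbations). $\mathbb{R}^n$ carries an arbitrary norm $\|\cdot\|$, $\mathbb{R}^m$ carries $\|b\|_\infty=\max_t|b_t|$, and $\operatorname{dist}(x,\Omega)=\inf_{\omega\in\Omega}\|x-\omega\|$. For $x\in\mathcal{F}_{\bar A}(\bar b)$, the calmness modulus $\operatorname{clm}\mathcal{F}_{\bar A}(\bar b,x)$ is the infimum of all $\kappa\ge0$ for which there are neighborhoods $V$ of $\bar b$ and $U$ of $x$ with $\operatorname{dist}(z,\mathcal{F}_{\bar A}(\bar b))\le\kappa\|b-\bar b\|_\infty$ for all $b\in V$ and all $z\in\mathcal{F}_{\bar A}(b)\cap U$. $\operatorname{ri}$ denotes relative interior. *)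

theory Defs
  imports "HOL-Analysis.Analysis"
begin

definition is_norm :: "('a::real_vector \<Rightarrow> real) \<Rightarrow> bool" where
  "is_norm N \<longleftrightarrow> (\<forall>x. 0 \<le> N x) \<and> (\<forall>x. N x = 0 \<longleftrightarrow> x = 0)
     \<and> (\<forall>c x. N (c *\<^sub>R x) = \<bar>c\<bar> * N x) \<and> (\<forall>x y. N (x + y) \<le> N x + N y)"

definition supnorm :: "real ^ 'm \<Rightarrow> real" where
  "supnorm b = Max (range (\<lambda>t. \<bar>b $ t\<bar>))"

definition distN :: "('a::real_vector \<Rightarrow> real) \<Rightarrow> 'a \<Rightarrow> 'a set \<Rightarrow> real" where
  "distN N x \<Omega> = Inf {N (x - \<omega>) | \<omega>. \<omega> \<in> \<Omega>}"

definition feas :: "real ^ 'n ^ 'm \<Rightarrow> real ^ 'm \<Rightarrow> (real ^ 'n) set" where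
  "feas A b = {x. \<forall>t. (A *v x) $ t \<le> b $ t}"

text \<open>Calmness modulus (as an extended real; +\<infinity> if no such \<kappa> exists).\<close>
definition clm :: "(real ^ 'n \<Rightarrow> real) \<Rightarrow> real ^ 'n ^ 'm \<Rightarrow> real ^ 'm \<Rightarrow> real ^ 'n \<Rightarrow> ereal" where
  "clm N A b0 x = Inf (ereal ` {\<kappa>. 0 \<le> \<kappa> \<and>
     (\<exists>V U. open V \<and> b0 \<in> V \<and> open U \<and> x \<in> U \<and>
        (\<forall>b\<in>V. \<forall>z\<in>feas A b \<inter> U. distN N z (feas A b0) \<le> \<kappa> * supnorm (b - b0)))})"

end

theory Submission
  imports Defs
begin

(* Calmness of the feasible-set mapping at a feasible point x depends only on the set of
   constraints active at x, and monotonically so: if every constraint active at x is active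
   at y, then every calmness constant at y is one at x. Indeed, a point z feasible for a
   perturbed right-hand side near x can be shifted along x - y and shrunk towards y; calmness
   at y, rescaled, bounds the distance of z to the unperturbed polyhedron. All points of the
   relative interior of a face share the smallest active set among the points of the face, so
   the modulus is constant there and minimal on the face. Finiteness of the modulus comes from
   Hoffman's error bound for the cone of directions allowed by the active constraints, proved
   by induction on the index set together with a compactness argument. *)

section \<open>Hoffman constants of homogeneous linear inequalities\<close>

definition hoffman_constant :: "('i \<Rightarrow> 'a::real_inner) \<Rightarrow> 'i set \<Rightarrow> real \<Rightarrow> bool" where
  "hoffman_constant a I H \<longleftrightarrow>
     (\<forall>u e. 0 \<le> e \<longrightarrow> (\<forall>t\<in>I. a t \<bullet> u \<le> e) \<longrightarrow>
        (\<exists>w. (\<forall>t\<in>I. a t \<bullet> w \<le> 0) \<and> norm (u - w) \<le> H * e))"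

(* The constraints not tight at l hold strictly near l, so eventually a Hoffman constant for
   the tight ones serves for all of them. *)
lemma hoffman_eventually_near_limit:
  fixes a :: "'i \<Rightarrow> 'a::real_inner"
  assumes I: "finite I" and u: "u \<longlonglongrightarrow> l" and e: "e \<longlonglongrightarrow> 0" and e_nonneg: "\<And>n. 0 \<le> e n"
    and ue: "\<And>n t. t \<in> I \<Longrightarrow> a t \<bullet> u n \<le> e n"
    and l: "\<And>t. t \<in> I \<Longrightarrow> a t \<bullet> l \<le> 0"
    and H: "hoffman_constant a {t\<in>I. a t \<bullet> l = 0} H"
  shows "\<forall>\<^sub>F n in sequentially. \<exists>w. (\<forall>t\<in>I. a t \<bullet> w \<le> 0) \<and> norm (u n - w) \<le> H * e n"
proof -
  let ?J = "{t\<in>I. a t \<bullet> l = 0}"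
  have "\<forall>\<^sub>F n in sequentially. a t \<bullet> u n + norm (a t) * (H * e n) < 0" if t: "t \<in> I - ?J" for t
  proof -
    have "(\<lambda>n. a t \<bullet> u n + norm (a t) * (H * e n)) \<longlonglongrightarrow> a t \<bullet> l + norm (a t) * (H * 0)"
      by (intro tendsto_intros u e)
    moreover have "a t \<bullet> l < 0"
      using l[of t] t by force
    ultimately show ?thesis
      using order_tendstoD(2) by fastforce
  qed
  then have "\<forall>\<^sub>F n in sequentially. \<forall>t\<in>I - ?J. a t \<bullet> u n + norm (a t) * (H * e n) < 0"
    using I by (intro eventually_ball_finite) auto
  then show ?thesis
  proof (rule eventually_mono)
    fix n
    assume slack: "\<forall>t\<in>I - ?J. a t \<bullet> u n + norm (a t) * (H * e n) < 0"
    obtain w where wJ: "\<forall>t\<in>?J. a t \<bullet> w \<le> 0" and w: "norm (u n - w) \<le> H * e n"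
      using H e_nonneg[of n] ue[of _ n] unfolding hoffman_constant_def by blast
    have "a t \<bullet> w \<le> 0" if t: "t \<in> I" for t
    proof (cases "t \<in> ?J")
      case False
      have "a t \<bullet> w = a t \<bullet> u n + a t \<bullet> (w - u n)"
        by (simp add: inner_diff_right)
      also have "\<dots> \<le> a t \<bullet> u n + norm (a t) * norm (w - u n)"
        using norm_cauchy_schwarz by simp
      also have "\<dots> \<le> a t \<bullet> u n + norm (a t) * (H * e n)"
        using w by (simp add: mult_left_mono norm_minus_commute)
      also have "\<dots> < 0"
        using slack t False by blast
      finally show ?thesis
        by simp
    qed (use wJ in blast)
    then show "\<exists>w. (\<forall>t\<in>I. a t \<bullet> w \<le> 0) \<and> norm (u n - w) \<le> H * e n"
      using w by blast
  qed
qed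

lemma LIMSEQ_zero_if_mult_real_less_1:
  fixes e :: "nat \<Rightarrow> real"
  assumes "\<And>k. 0 \<le> e k" and "\<And>k. real k * e k < 1"
  shows "e \<longlonglongrightarrow> 0"
proof (rule tendsto_sandwich[of "\<lambda>_. 0" _ _ "\<lambda>k. 1 / real k"])
  show "\<forall>\<^sub>F k in sequentially. e k \<le> 1 / real k"
    using eventually_gt_at_top[of 0]
  proof eventually_elim
    fix k :: nat
    assume "0 < k"
    then show "e k \<le> 1 / real k"
      using assms(2)[of k] by (simp add: field_simps)
  qed
  show "\<forall>\<^sub>F k in sequentially. 0 \<le> e k"
    using assms(1) by simp
  show "(\<lambda>k. 1 / real k) \<longlonglongrightarrow> 0"
    by (rule lim_inverse_n')
qed (rule tendsto_const)

lemma exists_inner_nonzero_if_in_span: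
  assumes "l \<in> span (a ` I)" and "l \<noteq> 0"
  shows "\<exists>t\<in>I. a t \<bullet> l \<noteq> 0"
proof (rule ccontr)
  assume "\<not> ?thesis"
  then have "orthogonal l y" if "y \<in> a ` I" for y
    using that by (auto simp: orthogonal_def inner_commute)
  then have "orthogonal l l"
    using orthogonal_to_span[OF assms(1)] by blast
  then show False
    using assms(2) by (simp add: orthogonal_self)
qed

lemma hoffman_constant_on_span_sphere:
  fixes a :: "'i \<Rightarrow> 'a::euclidean_space"
  assumes I: "finite I" and IH: "\<And>J. J \<subset> I \<Longrightarrow> \<exists>H. hoffman_constant a J H"
  shows "\<exists>H\<ge>0. \<forall>u e. u \<in> span (a ` I) \<longrightarrow> norm u = 1 \<longrightarrow> 0 \<le> e \<longrightarrow> (\<forall>t\<in>I. a t \<bullet> u \<le> e) \<longrightarrow>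
           (\<exists>w. (\<forall>t\<in>I. a t \<bullet> w \<le> 0) \<and> norm (u - w) \<le> H * e)"
proof (rule ccontr)
  (* A limit l of bad unit vectors is a nonzero element of the span, so some constraint is
     strict at l; the induction hypothesis for the constraints tight at l then gives a uniform
     constant near l. *)
  assume "\<not> ?thesis"
  then have "\<forall>k::nat. \<exists>u e. u \<in> span (a ` I) \<and> norm u = 1 \<and> 0 \<le> e \<and> (\<forall>t\<in>I. a t \<bullet> u \<le> e) \<and>
               (\<forall>w. (\<forall>t\<in>I. a t \<bullet> w \<le> 0) \<longrightarrow> real k * e < norm (u - w))"
    by (metis of_nat_0_le_iff not_le)
  then obtain u e where u_span: "\<And>k. u k \<in> span (a ` I)" and u_norm: "\<And>k. norm (u k) = 1"
    and e_nonneg: "\<And>k. 0 \<le> e k" and ue: "\<And>k t. t \<in> I \<Longrightarrow> a t \<bullet> u k \<le> e k"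
    and far: "\<And>k w. \<forall>t\<in>I. a t \<bullet> w \<le> 0 \<Longrightarrow> real k * e k < norm (u k - w)"
    by metis
  have ke_less: "real k * e k < 1" for k
    using far[of 0 k] u_norm[of k] by simp
  have "compact (sphere (0::'a) 1 \<inter> span (a ` I))"
    by (simp add: compact_Int_closed)
  then obtain l r where l: "l \<in> sphere 0 1 \<inter> span (a ` I)" and r: "strict_mono r"
    and ur: "(u \<circ> r) \<longlonglongrightarrow> l"
    using u_span u_norm by (metis compact_imp_seq_compact seq_compactE IntI mem_sphere_0)
  have er: "(e \<circ> r) \<longlonglongrightarrow> 0"
    using LIMSEQ_subseq_LIMSEQ[OF LIMSEQ_zero_if_mult_real_less_1[OF e_nonneg ke_less] r] .
  have l_cone: "a t \<bullet> l \<le> 0" if "t \<in> I" for t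
  proof (rule LIMSEQ_le[OF tendsto_inner[OF tendsto_const ur] er])
    show "\<exists>N. \<forall>n\<ge>N. a t \<bullet> (u \<circ> r) n \<le> (e \<circ> r) n"
      using ue that by auto
  qed
  define J where "J = {t\<in>I. a t \<bullet> l = 0}"
  have "\<exists>t\<in>I. a t \<bullet> l \<noteq> 0"
    using l by (intro exists_inner_nonzero_if_in_span) auto
  then have "J \<subset> I"
    by (auto simp: J_def)
  then obtain H where H: "hoffman_constant a J H"
    using IH by blast
  have "\<forall>\<^sub>F n in sequentially. \<exists>w. (\<forall>t\<in>I. a t \<bullet> w \<le> 0) \<and> norm ((u \<circ> r) n - w) \<le> H * (e \<circ> r) n"
    by (rule hoffman_eventually_near_limit[OF I ur er _ _ l_cone H[unfolded J_def]])
      (use e_nonneg ue in auto)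
  moreover have "\<forall>\<^sub>F n in sequentially. H \<le> real (r n)"
    using filterlim_compose[OF filterlim_real_sequentially filterlim_subseq[OF r]]
    unfolding filterlim_at_top by blast
  ultimately obtain n where H_le: "H \<le> real (r n)"
    and "\<exists>w. (\<forall>t\<in>I. a t \<bullet> w \<le> 0) \<and> norm ((u \<circ> r) n - w) \<le> H * (e \<circ> r) n"
    using eventually_happens'[OF sequentially_bot eventually_conj] by blast
  then obtain w where w_cone: "\<forall>t\<in>I. a t \<bullet> w \<le> 0" and w: "norm (u (r n) - w) \<le> H * e (r n)"
    by auto
  have "real (r n) * e (r n) < norm (u (r n) - w)"
    using far w_cone by blast
  also have "\<dots> \<le> real (r n) * e (r n)"
    using w H_le e_nonneg by (meson mult_right_mono order_trans)
  finally show False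
    by simp
qed

lemma hoffman_constant_of_span_sphere:
  fixes a :: "'i \<Rightarrow> 'a::euclidean_space"
  assumes H_nonneg: "0 \<le> H"
    and H: "\<And>u e. u \<in> span (a ` I) \<Longrightarrow> norm u = 1 \<Longrightarrow> 0 \<le> e \<Longrightarrow> \<forall>t\<in>I. a t \<bullet> u \<le> e \<Longrightarrow>
              \<exists>w. (\<forall>t\<in>I. a t \<bullet> w \<le> 0) \<and> norm (u - w) \<le> H * e"
  shows "hoffman_constant a I H"
  unfolding hoffman_constant_def
proof (intro allI impI)
  fix u :: 'a and e :: real
  assume e: "0 \<le> e" and ue: "\<forall>t\<in>I. a t \<bullet> u \<le> e"
  obtain s z where s: "s \<in> span (a ` I)" and z: "\<And>w. w \<in> span (a ` I) \<Longrightarrow> orthogonal z w"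
    and u_eq: "u = s + z"
    using orthogonal_subspace_decomp_exists[of "a ` I" u] by metis
  have az: "a t \<bullet> z = 0" if "t \<in> I" for t
    using z[of "a t"] that by (auto simp: span_base orthogonal_def inner_commute)
  show "\<exists>w. (\<forall>t\<in>I. a t \<bullet> w \<le> 0) \<and> norm (u - w) \<le> H * e"
  proof (cases "s = 0")
    case True
    then show ?thesis
      using az u_eq e H_nonneg by (intro exI[of _ u]) auto
  next
    case False
    define \<nu> where "\<nu> = norm s"
    have \<nu>: "0 < \<nu>"
      using False by (simp add: \<nu>_def)
    have "\<forall>t\<in>I. a t \<bullet> ((1 / \<nu>) *\<^sub>R s) \<le> e / \<nu>"
      using ue az u_eq \<nu> by (simp add: inner_add_right divide_right_mono)
    then obtain w where w_cone: "\<forall>t\<in>I. a t \<bullet> w \<le> 0"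
      and w: "norm ((1 / \<nu>) *\<^sub>R s - w) \<le> H * (e / \<nu>)"
      using H[of "(1 / \<nu>) *\<^sub>R s" "e / \<nu>"] s e \<nu> by (auto simp: \<nu>_def span_scale)
    show ?thesis
    proof (intro exI[of _ "\<nu> *\<^sub>R w + z"] conjI ballI)
      fix t
      assume "t \<in> I"
      then show "a t \<bullet> (\<nu> *\<^sub>R w + z) \<le> 0"
        using w_cone az \<nu> by (simp add: inner_add_right mult_nonneg_nonpos)
    next
      have "u - (\<nu> *\<^sub>R w + z) = \<nu> *\<^sub>R ((1 / \<nu>) *\<^sub>R s - w)"
        using u_eq \<nu> by (simp add: algebra_simps)
      then have "norm (u - (\<nu> *\<^sub>R w + z)) = \<nu> * norm ((1 / \<nu>) *\<^sub>R s - w)"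
        using \<nu> by simp
      also have "\<dots> \<le> \<nu> * (H * (e / \<nu>))"
        using mult_left_mono[OF w less_imp_le[OF \<nu>]] .
      also have "\<dots> = H * e"
        using \<nu> by simp
      finally show "norm (u - (\<nu> *\<^sub>R w + z)) \<le> H * e" .
    qed
  qed
qed

lemma hoffman_constant_exists:
  fixes a :: "'i \<Rightarrow> 'a::euclidean_space"
  assumes "finite I"
  shows "\<exists>H\<ge>0. hoffman_constant a I H"
  using assms
proof (induction I rule: finite_psubset_induct)
  case (psubset I)
  have IH: "\<exists>H. hoffman_constant a J H" if "J \<subset> I" for J
    using psubset.IH[OF that] by blast
  obtain H where H_nonneg: "0 \<le> H" and H: "\<forall>u e. u \<in> span (a ` I) \<longrightarrow> norm u = 1 \<longrightarrow> 0 \<le> e \<longrightarrow>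
      (\<forall>t\<in>I. a t \<bullet> u \<le> e) \<longrightarrow> (\<exists>w. (\<forall>t\<in>I. a t \<bullet> w \<le> 0) \<and> norm (u - w) \<le> H * e)"
    using hoffman_constant_on_span_sphere[OF psubset.hyps IH] by blast
  have "hoffman_constant a I H"
    using H by (intro hoffman_constant_of_span_sphere[OF H_nonneg]) blast
  then show ?case
    using H_nonneg by blast
qed

section \<open>Norms on Euclidean space\<close>

lemma is_norm_nonneg: "is_norm N \<Longrightarrow> 0 \<le> N x"
  by (simp add: is_norm_def)

lemma is_norm_eq_0_iff: "is_norm N \<Longrightarrow> N x = 0 \<longleftrightarrow> x = 0"
  by (simp add: is_norm_def)

lemma is_norm_zero: "is_norm N \<Longrightarrow> N 0 = 0"
  by (simp add: is_norm_def)

lemma is_norm_scaleR: "is_norm N \<Longrightarrow> N (c *\<^sub>R x) = \<bar>c\<bar> * N x"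
  by (simp add: is_norm_def)

lemma is_norm_triangle: "is_norm N \<Longrightarrow> N (x + y) \<le> N x + N y"
  by (simp add: is_norm_def)

lemma is_norm_minus_commute: "is_norm N \<Longrightarrow> N (x - y) = N (y - x)"
  using is_norm_scaleR[of N "-1" "y - x"] by simp

lemma is_norm_sum: "is_norm N \<Longrightarrow> N (sum f S) \<le> (\<Sum>i\<in>S. N (f i))"
proof (induction S rule: infinite_finite_induct)
  case (insert i S)
  then show ?case
    using is_norm_triangle[of N "f i" "sum f S"] by simp
qed (simp_all add: is_norm_zero)

lemma is_norm_le_norm:
  fixes N :: "'a::euclidean_space \<Rightarrow> real"
  assumes N: "is_norm N"
  shows "\<exists>C>0. \<forall>x. N x \<le> C * norm x"
proof (intro exI[of _ "(\<Sum>i\<in>Basis. N i) + 1"] conjI allI)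
  have sum_nonneg: "0 \<le> (\<Sum>i\<in>Basis. N i)"
    using is_norm_nonneg[OF N] by (simp add: sum_nonneg)
  then show "0 < (\<Sum>i\<in>Basis. N i) + 1"
    by simp
  fix x :: 'a
  have "N x = N (\<Sum>i\<in>Basis. (x \<bullet> i) *\<^sub>R i)"
    by (simp add: euclidean_representation)
  also have "\<dots> \<le> (\<Sum>i\<in>Basis. N ((x \<bullet> i) *\<^sub>R i))"
    by (rule is_norm_sum[OF N])
  also have "\<dots> = (\<Sum>i\<in>Basis. \<bar>x \<bullet> i\<bar> * N i)"
    by (simp add: is_norm_scaleR[OF N])
  also have "\<dots> \<le> (\<Sum>i\<in>Basis. norm x * N i)"
    by (intro sum_mono mult_right_mono Basis_le_norm is_norm_nonneg[OF N])
  also have "\<dots> \<le> ((\<Sum>i\<in>Basis. N i) + 1) * norm x"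
    using sum_nonneg by (simp add: sum_distrib_left algebra_simps)
  finally show "N x \<le> ((\<Sum>i\<in>Basis. N i) + 1) * norm x" .
qed

lemma convex_on_is_norm: "is_norm N \<Longrightarrow> convex_on UNIV N"
proof (rule convex_onI)
  fix t :: real and x y
  assume N: "is_norm N" and t: "0 < t" "t < 1"
  show "N ((1 - t) *\<^sub>R x + t *\<^sub>R y) \<le> (1 - t) * N x + t * N y"
    using is_norm_triangle[OF N] is_norm_scaleR[OF N] t by (metis abs_of_pos diff_gt_0_iff_gt)
qed simp

lemma is_norm_ge_norm:
  fixes N :: "'a::euclidean_space \<Rightarrow> real"
  assumes N: "is_norm N"
  shows "\<exists>c>0. \<forall>x. c * norm x \<le> N x"
proof -
  obtain i :: 'a where "i \<in> Basis"
    using nonempty_Basis by blast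
  then have "sphere (0::'a) 1 \<noteq> {}"
    by (auto intro!: exI[of _ i])
  moreover have "continuous_on (sphere 0 1) N"
    using convex_on_continuous[OF open_UNIV convex_on_is_norm[OF N]] continuous_on_subset by blast
  ultimately obtain x0 where x0: "x0 \<in> sphere (0::'a) 1" and min: "\<forall>y\<in>sphere 0 1. N x0 \<le> N y"
    using continuous_attains_inf[OF compact_sphere] by blast
  have "0 < N x0"
    using x0 is_norm_nonneg[OF N, of x0] is_norm_eq_0_iff[OF N, of x0] by auto
  moreover have "N x0 * norm x \<le> N x" for x
  proof (cases "x = 0")
    case False
    then have "N x0 \<le> N ((1 / norm x) *\<^sub>R x)"
      using min by simp
    then show ?thesis
      using False is_norm_scaleR[OF N] by (simp add: field_simps)
  qed (simp add: is_norm_zero[OF N])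
  ultimately show ?thesis
    by blast
qed

section \<open>Calmness of the feasible set mapping\<close>

lemma mem_feas_iff: "x \<in> feas A b \<longleftrightarrow> (\<forall>t. A $ t \<bullet> x \<le> b $ t)"
  by (simp add: feas_def matrix_vector_mul_component)

lemma distN_le:
  assumes "is_norm N" and "w \<in> S"
  shows "distN N z S \<le> N (z - w)"
  unfolding distN_def
  using assms is_norm_nonneg[OF assms(1)] by (intro cInf_lower bdd_belowI[of _ 0]) auto

lemma distN_ge:
  assumes "S \<noteq> {}" and "\<And>w. w \<in> S \<Longrightarrow> r \<le> N (z - w)"
  shows "r \<le> distN N z S"
  unfolding distN_def
  using assms by (intro cInf_greatest) auto

lemma abs_component_le_supnorm: "\<bar>v $ t\<bar> \<le> supnorm v"
  unfolding supnorm_def by (rule Max_ge) auto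

lemma supnorm_nonneg: "0 \<le> supnorm v"
  using abs_component_le_supnorm abs_ge_zero order_trans by blast

lemma supnorm_scaleR_le:
  assumes "0 \<le> \<mu>"
  shows "supnorm (\<mu> *\<^sub>R v) \<le> \<mu> * supnorm v"
  unfolding supnorm_def[of "\<mu> *\<^sub>R v"]
proof (rule Max.boundedI)
  fix r
  assume "r \<in> range (\<lambda>t. \<bar>(\<mu> *\<^sub>R v) $ t\<bar>)"
  then obtain t where "r = \<bar>\<mu>\<bar> * \<bar>v $ t\<bar>"
    by (auto simp: abs_mult)
  then show "r \<le> \<mu> * supnorm v"
    using abs_component_le_supnorm[of v t] assms by (simp add: mult_left_mono)
qed auto

definition active_set :: "real ^ 'n ^ 'm \<Rightarrow> real ^ 'm \<Rightarrow> real ^ 'n \<Rightarrow> 'm set" where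
  "active_set A b x = {t. A $ t \<bullet> x = b $ t}"

lemma feas_add_small_tangent:
  fixes A :: "real ^ 'n ^ 'm"
  assumes x: "x \<in> feas A b"
  shows "\<exists>\<delta>>0. \<forall>c. norm c < \<delta> \<longrightarrow> (\<forall>t\<in>active_set A b x. A $ t \<bullet> c \<le> 0) \<longrightarrow> x + c \<in> feas A b"
proof -
  have "\<forall>\<^sub>F c in nhds 0. \<forall>t. t \<notin> active_set A b x \<longrightarrow> A $ t \<bullet> (x + c) < b $ t"
  proof (rule eventually_all_finite)
    fix t
    have "((\<lambda>c. A $ t \<bullet> (x + c)) \<longlongrightarrow> A $ t \<bullet> (x + 0)) (nhds 0)"
      by (intro tendsto_intros filterlim_ident)
    then show "\<forall>\<^sub>F c in nhds 0. t \<notin> active_set A b x \<longrightarrow> A $ t \<bullet> (x + c) < b $ t"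
      using x order_tendstoD(2) by (fastforce simp: active_set_def mem_feas_iff order_le_less)
  qed
  then obtain \<delta> where "0 < \<delta>"
    and inactive: "\<And>c t. norm c < \<delta> \<Longrightarrow> t \<notin> active_set A b x \<Longrightarrow> A $ t \<bullet> (x + c) < b $ t"
    unfolding eventually_nhds_metric by (auto simp: dist_norm)
  moreover have "A $ t \<bullet> (x + c) \<le> b $ t"
    if "t \<in> active_set A b x" and "A $ t \<bullet> c \<le> 0" for t c
    using that by (simp add: active_set_def inner_add_right)
  ultimately show ?thesis
    unfolding mem_feas_iff by (meson less_imp_le)
qed

lemma distN_feas_le_tangent:
  fixes N :: "real ^ 'n \<Rightarrow> real" and A :: "real ^ 'n ^ 'm"
  assumes N: "is_norm N" and x: "x \<in> feas A b"
  shows "\<exists>\<rho>>0. \<forall>z c. norm (z - x) < \<rho> \<longrightarrow> (\<forall>t\<in>active_set A b x. A $ t \<bullet> c \<le> 0) \<longrightarrow>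
           distN N z (feas A b) \<le> N (z - x - c)"
proof -
  obtain \<delta> where \<delta>: "0 < \<delta>"
    and small: "\<And>c. norm c < \<delta> \<Longrightarrow> \<forall>t\<in>active_set A b x. A $ t \<bullet> c \<le> 0 \<Longrightarrow> x + c \<in> feas A b"
    using feas_add_small_tangent[OF x] by blast
  obtain C where C: "0 < C" "\<And>v. N v \<le> C * norm v"
    using is_norm_le_norm[OF N] by blast
  obtain m where m: "0 < m" "\<And>v. m * norm v \<le> N v"
    using is_norm_ge_norm[OF N] by blast
  show ?thesis
  proof (intro exI[of _ "\<delta> * m / (2 * C)"] conjI allI impI)
    show "0 < \<delta> * m / (2 * C)"
      using \<delta> m C by simp
    fix z c
    assume z: "norm (z - x) < \<delta> * m / (2 * C)" and c: "\<forall>t\<in>active_set A b x. A $ t \<bullet> c \<le> 0"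
    show "distN N z (feas A b) \<le> N (z - x - c)"
    proof (cases "N c \<le> 2 * N (z - x)")
      case True
      have "m * norm c \<le> 2 * (C * norm (z - x))"
        using True m(2)[of c] C(2)[of "z - x"] by linarith
      also have "\<dots> < \<delta> * m"
        using z C by (simp add: field_simps)
      finally have "x + c \<in> feas A b"
        using small c m(1) by simp
      then show ?thesis
        using distN_le[OF N] by (simp add: diff_diff_eq)
    next
      case False
      have "N c \<le> N (z - x) + N (z - x - c)"
        using is_norm_triangle[OF N, of "z - x" "c - (z - x)"] is_norm_minus_commute[OF N, of c "z - x"]
        by (simp add: algebra_simps)
      then show ?thesis
        using False distN_le[OF N x, of z] by linarith
    qed
  qed
qed

definition calm_constants ::
    "(real ^ 'n \<Rightarrow> real) \<Rightarrow> real ^ 'n ^ 'm \<Rightarrow> real ^ 'm \<Rightarrow> real ^ 'n \<Rightarrow> real set" where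
  "calm_constants N A b0 x = {\<kappa>. 0 \<le> \<kappa> \<and>
     (\<exists>V U. open V \<and> b0 \<in> V \<and> open U \<and> x \<in> U \<and>
        (\<forall>b\<in>V. \<forall>z\<in>feas A b \<inter> U. distN N z (feas A b0) \<le> \<kappa> * supnorm (b - b0)))}"

lemma clm_eq_Inf_calm_constants: "clm N A b x = Inf (ereal ` calm_constants N A b x)"
  by (simp add: clm_def calm_constants_def)

lemma calm_constantsI:
  assumes "0 \<le> \<kappa>" and "0 < \<rho>"
    and "\<And>b' z. z \<in> feas A b' \<Longrightarrow> norm (z - x) < \<rho> \<Longrightarrow> distN N z (feas A b) \<le> \<kappa> * supnorm (b' - b)"
  shows "\<kappa> \<in> calm_constants N A b x"
  unfolding calm_constants_def
  using assms by (intro CollectI conjI exI[of _ UNIV] exI[of _ "ball x \<rho>"])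
    (auto simp: dist_norm norm_minus_commute)

lemma calm_constants_nonempty:
  fixes N :: "real ^ 'n \<Rightarrow> real" and A :: "real ^ 'n ^ 'm"
  assumes N: "is_norm N" and x: "x \<in> feas A b"
  shows "calm_constants N A b x \<noteq> {}"
proof -
  obtain H where "0 \<le> H" and H: "hoffman_constant (\<lambda>t. A $ t) (active_set A b x) H"
    using hoffman_constant_exists[OF finite] by blast
  obtain \<rho> where \<rho>: "0 < \<rho>"
    and near: "\<And>z c. norm (z - x) < \<rho> \<Longrightarrow> \<forall>t\<in>active_set A b x. A $ t \<bullet> c \<le> 0 \<Longrightarrow>
                 distN N z (feas A b) \<le> N (z - x - c)"
    using distN_feas_le_tangent[OF N x] by blast
  obtain C where C: "0 < C" "\<And>v. N v \<le> C * norm v"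
    using is_norm_le_norm[OF N] by blast
  have "C * H \<in> calm_constants N A b x"
  proof (rule calm_constantsI)
    show "0 \<le> C * H"
      using C(1) \<open>0 \<le> H\<close> by simp
    fix b' z
    assume z: "z \<in> feas A b'" and z_near: "norm (z - x) < \<rho>"
    have "A $ t \<bullet> (z - x) \<le> supnorm (b' - b)" if "t \<in> active_set A b x" for t
    proof -
      have "A $ t \<bullet> z \<le> b' $ t"
        using z by (simp add: mem_feas_iff)
      then show ?thesis
        using that abs_le_D1[OF abs_component_le_supnorm[of "b' - b" t]]
        by (simp add: active_set_def inner_diff_right)
    qed
    then obtain w where w_cone: "\<forall>t\<in>active_set A b x. A $ t \<bullet> w \<le> 0"
      and w: "norm (z - x - w) \<le> H * supnorm (b' - b)"
      using H supnorm_nonneg unfolding hoffman_constant_def by blast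
    have "distN N z (feas A b) \<le> N (z - x - w)"
      using near z_near w_cone by blast
    also have "\<dots> \<le> C * (H * supnorm (b' - b))"
      using C w by (meson mult_left_mono less_imp_le order_trans)
    finally show "distN N z (feas A b) \<le> C * H * supnorm (b' - b)"
      by (simp add: mult.assoc)
  qed (rule \<rho>)
  then show ?thesis
    by blast
qed

lemma exists_shift_into_halfspaces:
  fixes a :: "'i \<Rightarrow> 'a::real_inner"
  assumes "finite I"
    and "\<And>t. t \<in> I \<Longrightarrow> a t \<bullet> d < 0 \<or> (a t \<bullet> d = 0 \<and> a t \<bullet> v \<le> \<beta> t)"
  shows "\<exists>s. \<forall>t\<in>I. a t \<bullet> (v + s *\<^sub>R d) \<le> \<beta> t"
proof -
  have "\<forall>\<^sub>F s in at_top. a t \<bullet> (v + s *\<^sub>R d) \<le> \<beta> t" if t: "t \<in> I" for t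
  proof (cases "a t \<bullet> d < 0")
    case True
    show ?thesis
      using eventually_ge_at_top[of "(\<beta> t - a t \<bullet> v) / (a t \<bullet> d)"]
      by (rule eventually_mono) (use True in \<open>simp add: neg_divide_le_eq algebra_simps\<close>)
  next
    case False
    then show ?thesis
      using assms(2)[OF t] by (simp add: inner_add_right)
  qed
  then have "\<forall>\<^sub>F s in at_top. \<forall>t\<in>I. a t \<bullet> (v + s *\<^sub>R d) \<le> \<beta> t"
    using assms(1) by (intro eventually_ball_finite) auto
  then show ?thesis
    by (auto simp: eventually_at_top_linorder)
qed

lemma eventually_feas_along_ray:
  fixes A :: "real ^ 'n ^ 'm"
  assumes y: "y \<in> feas A b" and q: "\<And>t. t \<in> active_set A b y \<Longrightarrow> A $ t \<bullet> q \<le> \<beta> $ t"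
  shows "\<forall>\<^sub>F \<mu> in at_right 0. y + \<mu> *\<^sub>R q \<in> feas A (b + \<mu> *\<^sub>R \<beta>)"
  unfolding mem_feas_iff
proof (rule eventually_all_finite)
  fix t
  show "\<forall>\<^sub>F \<mu> in at_right 0. A $ t \<bullet> (y + \<mu> *\<^sub>R q) \<le> (b + \<mu> *\<^sub>R \<beta>) $ t"
  proof (cases "t \<in> active_set A b y")
    case True
    show ?thesis
      using eventually_at_right_less[of 0]
    proof (rule eventually_mono)
      fix \<mu> :: real
      assume "0 < \<mu>"
      then have "\<mu> * (A $ t \<bullet> q) \<le> \<mu> * \<beta> $ t"
        using q[OF True] by (simp add: mult_left_mono)
      then show "A $ t \<bullet> (y + \<mu> *\<^sub>R q) \<le> (b + \<mu> *\<^sub>R \<beta>) $ t"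
        using True by (simp add: active_set_def inner_add_right)
    qed
  next
    case False
    then have "A $ t \<bullet> y - b $ t < 0"
      using y by (auto simp: active_set_def mem_feas_iff order_le_less)
    moreover have "((\<lambda>\<mu>. A $ t \<bullet> (y + \<mu> *\<^sub>R q) - (b + \<mu> *\<^sub>R \<beta>) $ t) \<longlongrightarrow>
                    A $ t \<bullet> (y + 0 *\<^sub>R q) - (b + 0 *\<^sub>R \<beta>) $ t) (at_right 0)"
      by (intro tendsto_intros)
    ultimately have "\<forall>\<^sub>F \<mu> in at_right 0. A $ t \<bullet> (y + \<mu> *\<^sub>R q) - (b + \<mu> *\<^sub>R \<beta>) $ t < 0"
      using order_tendstoD(2) by fastforce
    then show ?thesis
      by (rule eventually_mono) simp
  qed
qed

lemma exists_shift_respecting_active: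
  fixes A :: "real ^ 'n ^ 'm"
  assumes x: "x \<in> feas A b" and active: "active_set A b x \<subseteq> active_set A b y"
    and z: "z \<in> feas A b'"
  shows "\<exists>s. \<forall>t\<in>active_set A b y. A $ t \<bullet> (z - x + s *\<^sub>R (x - y)) \<le> (b' - b) $ t"
proof (rule exists_shift_into_halfspaces[OF finite])
  fix t
  assume t: "t \<in> active_set A b y"
  show "A $ t \<bullet> (x - y) < 0 \<or> A $ t \<bullet> (x - y) = 0 \<and> A $ t \<bullet> (z - x) \<le> (b' - b) $ t"
  proof (cases "t \<in> active_set A b x")
    case True
    then show ?thesis
      using t active z by (auto simp: active_set_def mem_feas_iff inner_diff_right)
  next
    case False
    then show ?thesis
      using t x by (auto simp: active_set_def mem_feas_iff inner_diff_right order_le_less)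
  qed
qed

lemma distN_feas_le_rescaled:
  fixes N :: "real ^ 'n \<Rightarrow> real" and A :: "real ^ 'n ^ 'm"
  assumes N: "is_norm N" and "feas A b \<noteq> {}" and active: "active_set A b x \<subseteq> active_set A b y"
    and \<mu>: "0 < \<mu>"
    and near: "\<And>c. \<forall>t\<in>active_set A b x. A $ t \<bullet> c \<le> 0 \<Longrightarrow> distN N z (feas A b) \<le> N (z - x - c)"
  shows "\<mu> * distN N z (feas A b) \<le> distN N (y + \<mu> *\<^sub>R (z - x + s *\<^sub>R (x - y))) (feas A b)"
proof (rule distN_ge[OF assms(2)])
  fix \<omega>
  assume \<omega>: "\<omega> \<in> feas A b"
  define c where "c = (1 / \<mu>) *\<^sub>R (\<omega> - y) - s *\<^sub>R (x - y)"
  have "A $ t \<bullet> c \<le> 0" if "t \<in> active_set A b x" for t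
    using that active \<omega> \<mu>
    by (auto simp: c_def active_set_def mem_feas_iff inner_diff_right divide_nonpos_pos)
  then have "distN N z (feas A b) \<le> N (z - x - c)"
    using near by blast
  also have "z - x - c = (1 / \<mu>) *\<^sub>R (y + \<mu> *\<^sub>R (z - x + s *\<^sub>R (x - y)) - \<omega>)"
    using \<mu> by (simp add: c_def algebra_simps)
  also have "N \<dots> = N (y + \<mu> *\<^sub>R (z - x + s *\<^sub>R (x - y)) - \<omega>) / \<mu>"
    using \<mu> by (simp add: is_norm_scaleR[OF N])
  finally show "\<mu> * distN N z (feas A b) \<le> N (y + \<mu> *\<^sub>R (z - x + s *\<^sub>R (x - y)) - \<omega>)"
    using \<mu> by (simp add: field_simps)
qed

(* A point z near x feasible for b' is moved to y + \<mu> q, where q is z - x corrected along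
   x - y so as to respect the constraints active at y. For small \<mu> > 0 this point is feasible
   for b + \<mu> (b' - b) and lies in the calmness neighbourhood of y; rescaling by 1 / \<mu>
   transfers the bound back to z. *)
lemma calm_constants_antimono:
  fixes N :: "real ^ 'n \<Rightarrow> real" and A :: "real ^ 'n ^ 'm"
  assumes N: "is_norm N" and x: "x \<in> feas A b" and y: "y \<in> feas A b"
    and active: "active_set A b x \<subseteq> active_set A b y"
  shows "calm_constants N A b y \<subseteq> calm_constants N A b x"
proof
  fix \<kappa>
  assume "\<kappa> \<in> calm_constants N A b y"
  then obtain V U where \<kappa>: "0 \<le> \<kappa>" and V: "open V" "b \<in> V" and U: "open U" "y \<in> U"
    and calm: "\<And>b' z. b' \<in> V \<Longrightarrow> z \<in> feas A b' \<inter> U \<Longrightarrow>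
                 distN N z (feas A b) \<le> \<kappa> * supnorm (b' - b)"
    unfolding calm_constants_def by blast
  obtain \<rho> where \<rho>: "0 < \<rho>"
    and near: "\<And>z c. norm (z - x) < \<rho> \<Longrightarrow> \<forall>t\<in>active_set A b x. A $ t \<bullet> c \<le> 0 \<Longrightarrow>
                 distN N z (feas A b) \<le> N (z - x - c)"
    using distN_feas_le_tangent[OF N x] by blast
  show "\<kappa> \<in> calm_constants N A b x"
  proof (rule calm_constantsI[OF \<kappa> \<rho>])
    fix b' z
    assume z: "z \<in> feas A b'" and z_near: "norm (z - x) < \<rho>"
    define \<beta> where "\<beta> = b' - b"
    obtain s where s: "\<And>t. t \<in> active_set A b y \<Longrightarrow> A $ t \<bullet> (z - x + s *\<^sub>R (x - y)) \<le> \<beta> $ t"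
      using exists_shift_respecting_active[OF x active z] unfolding \<beta>_def by blast
    define q where "q = z - x + s *\<^sub>R (x - y)"
    have "\<forall>\<^sub>F \<mu> in at_right 0. b + \<mu> *\<^sub>R \<beta> \<in> V"
      using V by (intro topological_tendstoD[where l = b]) (auto intro!: tendsto_eq_intros)
    moreover have "\<forall>\<^sub>F \<mu> in at_right 0. y + \<mu> *\<^sub>R q \<in> U"
      using U by (intro topological_tendstoD[where l = y]) (auto intro!: tendsto_eq_intros)
    moreover have "\<forall>\<^sub>F \<mu> in at_right 0. y + \<mu> *\<^sub>R q \<in> feas A (b + \<mu> *\<^sub>R \<beta>)"
      using eventually_feas_along_ray[OF y] s by (simp add: q_def)
    ultimately have "\<forall>\<^sub>F \<mu> in at_right 0. 0 < \<mu> \<and> b + \<mu> *\<^sub>R \<beta> \<in> V \<and>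
        y + \<mu> *\<^sub>R q \<in> feas A (b + \<mu> *\<^sub>R \<beta>) \<inter> U"
      using eventually_at_right_less[of "0::real"] by eventually_elim blast
    then obtain \<mu> :: real where \<mu>: "0 < \<mu>" and "b + \<mu> *\<^sub>R \<beta> \<in> V"
      and "y + \<mu> *\<^sub>R q \<in> feas A (b + \<mu> *\<^sub>R \<beta>) \<inter> U"
      using eventually_happens'[OF trivial_limit_at_right_real] by blast
    then have "\<mu> * distN N z (feas A b) \<le> distN N (y + \<mu> *\<^sub>R q) (feas A b)"
      using distN_feas_le_rescaled[OF N _ active \<mu>] near[OF z_near] x unfolding q_def by blast
    also have "\<dots> \<le> \<kappa> * supnorm (\<mu> *\<^sub>R \<beta>)"
      using calm \<open>b + \<mu> *\<^sub>R \<beta> \<in> V\<close> \<open>y + \<mu> *\<^sub>R q \<in> feas A (b + \<mu> *\<^sub>R \<beta>) \<inter> U\<close> by fastforce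
    also have "\<dots> \<le> \<mu> * (\<kappa> * supnorm \<beta>)"
      using supnorm_scaleR_le[of \<mu> \<beta>] \<kappa> \<mu> by (simp add: mult_left_mono mult.left_commute)
    finally show "distN N z (feas A b) \<le> \<kappa> * supnorm (b' - b)"
      using \<mu> by (simp add: \<beta>_def)
  qed
qed

lemma clm_le_clm_if_active_subset:
  fixes N :: "real ^ 'n \<Rightarrow> real" and A :: "real ^ 'n ^ 'm"
  assumes "is_norm N" and "x \<in> feas A b" and "y \<in> feas A b"
    and "active_set A b x \<subseteq> active_set A b y"
  shows "clm N A b x \<le> clm N A b y"
  unfolding clm_eq_Inf_calm_constants
  using calm_constants_antimono[OF assms] by (intro Inf_superset_mono image_mono)

lemma clm_finite:
  fixes N :: "real ^ 'n \<Rightarrow> real" and A :: "real ^ 'n ^ 'm"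
  assumes "is_norm N" and "x \<in> feas A b"
  shows "\<exists>\<gamma>\<ge>0. clm N A b x = ereal \<gamma>"
proof -
  obtain \<kappa> where "\<kappa> \<in> calm_constants N A b x"
    using calm_constants_nonempty[OF assms] by blast
  then have "clm N A b x \<le> ereal \<kappa>"
    unfolding clm_eq_Inf_calm_constants by (simp add: Inf_lower)
  moreover have "0 \<le> clm N A b x"
    unfolding clm_eq_Inf_calm_constants by (rule Inf_greatest) (auto simp: calm_constants_def)
  ultimately show ?thesis
    by (cases "clm N A b x") auto
qed

lemma rel_interior_inner_eq_max:
  fixes S :: "'a::euclidean_space set"
  assumes "convex S" and z: "z \<in> rel_interior S" and y: "y \<in> S"
    and le: "\<And>x. x \<in> S \<Longrightarrow> a \<bullet> x \<le> \<beta>" and "a \<bullet> z = \<beta>"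
  shows "a \<bullet> y = \<beta>"
proof -
  obtain e where "1 < e" and "(1 - e) *\<^sub>R y + e *\<^sub>R z \<in> S"
    using convex_rel_interior_if[OF assms(1,2)] y hull_subset[of S] by blast
  then have "(1 - e) * (a \<bullet> y) + e * \<beta> \<le> \<beta>"
    using le \<open>a \<bullet> z = \<beta>\<close> by (metis inner_add_right inner_scaleR_right)
  then have "(e - 1) * (\<beta> - a \<bullet> y) \<le> 0"
    by (simp add: algebra_simps)
  then have "\<beta> \<le> a \<bullet> y"
    using \<open>1 < e\<close> by (simp add: mult_le_0_iff)
  then show ?thesis
    using le[OF y] by simp
qed

lemma active_set_rel_interior_subset:
  fixes A :: "real ^ 'n ^ 'm"
  assumes "convex F" and "F \<subseteq> feas A b" and "x \<in> rel_interior F" and "y \<in> F"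
  shows "active_set A b x \<subseteq> active_set A b y"
proof
  fix t
  assume "t \<in> active_set A b x"
  moreover have "A $ t \<bullet> v \<le> b $ t" if "v \<in> F" for v
    using that assms(2) by (auto simp: mem_feas_iff)
  ultimately show "t \<in> active_set A b y"
    using rel_interior_inner_eq_max[OF assms(1,3,4), of "A $ t" "b $ t"]
    by (simp add: active_set_def)
qed

theorem lemma2:
  fixes N :: "real ^ 'n \<Rightarrow> real" and A :: "real ^ 'n ^ 'm" and b :: "real ^ 'm"
    and F :: "(real ^ 'n) set"
  assumes "is_norm N"
    and "feas A b \<noteq> {}"
    and "F face_of feas A b"
  shows "\<exists>\<gamma>::real. \<gamma> \<ge> 0 \<and> (\<forall>x\<in>rel_interior F. clm N A b x = ereal \<gamma>)
           \<and> (\<forall>x\<in>F - rel_interior F. clm N A b x \<ge> ereal \<gamma>)"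
proof (cases "F = {}")
  case False
  have F: "convex F" "F \<subseteq> feas A b"
    using assms(3) face_of_imp_convex face_of_imp_subset by blast+
  obtain x0 where x0: "x0 \<in> rel_interior F"
    using False rel_interior_eq_empty[OF F(1)] by blast
  have clm_mono: "clm N A b x \<le> clm N A b y" if "x \<in> rel_interior F" and "y \<in> F" for x y
  proof (rule clm_le_clm_if_active_subset[OF assms(1)])
    show "x \<in> feas A b" "y \<in> feas A b"
      using that F(2) rel_interior_subset by blast+
    show "active_set A b x \<subseteq> active_set A b y"
      using active_set_rel_interior_subset[OF F that] .
  qed
  obtain \<gamma> where "0 \<le> \<gamma>" and \<gamma>: "clm N A b x0 = ereal \<gamma>"
    using clm_finite[OF assms(1)] x0 F(2) rel_interior_subset by blast
  have "clm N A b x = ereal \<gamma>" if "x \<in> rel_interior F" for x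
  proof (rule antisym)
    show "clm N A b x \<le> ereal \<gamma>"
      using clm_mono[OF that] x0 rel_interior_subset \<gamma> by fastforce
    show "ereal \<gamma> \<le> clm N A b x"
      using clm_mono[OF x0] that rel_interior_subset \<gamma> by fastforce
  qed
  moreover have "ereal \<gamma> \<le> clm N A b x" if "x \<in> F" for x
    using clm_mono[OF x0 that] \<gamma> by simp
  ultimately show ?thesis
    using \<open>0 \<le> \<gamma>\<close> by blast
qed auto

end
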